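(* Let $(\mathbb{X},d,\mu)$ be a proper metric measure space satisfying the $\delta$-annular decay property for some $\delta\in(0,1]$. Suppose there is $\gamma\in(0,1]$ such that $\varrho$ is a $\gamma$-H\"older continuous admissible radius function in a bounded domain $\Omega\subset\mathbb{X}$. Then every $u\in L^\infty(\Omega)$ with $\mathcal{M}u=u$ in $\Omega$ is locally $\gamma\delta$-H\"older continuous in $\Omega$. In particular, if $\delta=\gamma=1$ then $u$ is locally Lipschitz continuous in $\Omega$.
   Context: A metric space is proper if closed bounded sets are compact. A metric measure space $(\mathbb{X},d,\mu)$ is a metric space with a positive Borel regular measure $\mu$ with $0<\mu(B)<\infty$ for every ball $B$. It satisfies the $\delta$-annular decay property ($\delta\in(0,1]$) if there is $D_\delta\geq1$ with $\mu(B(x,R)\setminus B(x,r))\leq D_\delta\left(\frac{R-r}{R}\right)^\delta\mu(B(x,R))$ for all $x\in\mathbb{X}$, $0<r\leq R$. An admissible radius function in $\Omega$ is a function $\varrho\in C(\overline\Omega)$, $\varrho\ge0$, with $0<\varrho(x)\leq\mathrm{dist}(x,\partial\Omega)$ for $x\in\Omega$ and $\varrho(x)=0$ iff $x\in\partial\Omega$; it is $\gamma$-H\"older continuous if $|\varrho(x)-\varrho(y)|\le L\,d(x,y)^\gamma$ for some $L>0$. For $x\in\Omega$ let $B_x=\overline{B}(x,\varrho(x))$ and $\mathcal{M}u(x)=\frac{1}{\mu(B_x)}\int_{B_x}u\,d\mu$. Locally $\theta$-H\"older continuous in $\Omega$ means: for every compact $K\subset\Omega$ there is $C$ with $|u(x)-u(y)|\leq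 C\,d(x,y)^\theta$ for all $x,y\in K$. *)

theory Defs
  imports "HOL-Analysis.Analysis"
begin

definition proper_space :: "'a::metric_space itself \<Rightarrow> bool" where
  "proper_space _ \<longleftrightarrow> (\<forall>S::'a set. closed S \<and> bounded S \<longrightarrow> compact S)"

definition metric_measure_space :: "'a::metric_space measure \<Rightarrow> bool" where
  "metric_measure_space \<mu> \<longleftrightarrow> sets \<mu> = sets borel \<and>
     (\<forall>x r. 0 < r \<longrightarrow> 0 < emeasure \<mu> (ball x r) \<and> emeasure \<mu> (ball x r) < \<infinity>)"

definition annular_decay :: "'a::metric_space measure \<Rightarrow> real \<Rightarrow> bool" where
  "annular_decay \<mu> \<delta> \<longleftrightarrow> (\<exists>D\<ge>1. \<forall>x r R. 0 < r \<and> r \<le> R \<longrightarrow>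
     measure \<mu> (ball x R - ball x r) \<le> D * ((R - r) / R) powr \<delta> * measure \<mu> (ball x R))"

definition domain :: "'a::metric_space set \<Rightarrow> bool" where
  "domain \<Omega> \<longleftrightarrow> open \<Omega> \<and> connected \<Omega> \<and> \<Omega> \<noteq> {}"

definition admissible_radius :: "'a::metric_space set \<Rightarrow> ('a \<Rightarrow> real) \<Rightarrow> bool" where
  "admissible_radius \<Omega> \<rho> \<longleftrightarrow> continuous_on (closure \<Omega>) \<rho> \<and>
     (\<forall>x\<in>closure \<Omega>. 0 \<le> \<rho> x) \<and>
     (\<forall>x\<in>\<Omega>. 0 < \<rho> x \<and> (frontier \<Omega> \<noteq> {} \<longrightarrow> \<rho> x \<le> infdist x (frontier \<Omega>))) \<and>
     (\<forall>x\<in>closure \<Omega>. \<rho> x = 0 \<longleftrightarrow> x \<in> frontier \<Omega>)"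

definition holder_on :: "'a::metric_space set \<Rightarrow> real \<Rightarrow> ('a \<Rightarrow> real) \<Rightarrow> bool" where
  "holder_on S \<gamma> f \<longleftrightarrow> (\<exists>L>0. \<forall>x\<in>S. \<forall>y\<in>S. \<bar>f x - f y\<bar> \<le> L * dist x y powr \<gamma>)"

definition mean_op :: "'a::metric_space measure \<Rightarrow> ('a \<Rightarrow> real) \<Rightarrow> ('a \<Rightarrow> real) \<Rightarrow> 'a \<Rightarrow> real" where
  "mean_op \<mu> \<rho> u x = (1 / measure \<mu> (cball x (\<rho> x))) * (\<integral>y\<in>cball x (\<rho> x). u y \<partial>\<mu>)"

definition locally_holder :: "'a::metric_space set \<Rightarrow> real \<Rightarrow> ('a \<Rightarrow> real) \<Rightarrow> bool" where
  "locally_holder \<Omega> \<theta> u \<longleftrightarrow> (\<forall>K. compact K \<and> K \<subseteq> \<Omega> \<longrightarrow>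
     (\<exists>C. \<forall>x\<in>K. \<forall>y\<in>K. \<bar>u x - u y\<bar> \<le> C * dist x y powr \<theta>))"

end

theory Submission
  imports Defs
begin

text \<open>Fix a compact \<open>K \<subseteq> \<Omega>\<close> and let \<open>m > 0\<close> be the minimum of \<open>\<rho>\<close> on \<open>K\<close>.
  For \<open>x, y \<in> K\<close> at distance \<open>d\<close>, the closed balls \<open>B\<^sub>x\<close> and \<open>B\<^sub>y\<close> have radii \<open>\<ge> m\<close>
  and differ in centre and radius by \<open>e \<lesssim> d\<^sup>\<gamma>\<close>, so their symmetric difference
  lies in two annuli of width \<open>2e\<close>. Annular decay bounds the measure of these
  annuli by \<open>(2e/m)\<^sup>\<delta> \<mu>(B\<^sub>x)\<close> (it also yields the doubling estimate needed to
  compare balls around \<open>y\<close> with \<open>B\<^sub>x\<close>), and since \<open>u\<close> is bounded the two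
  averages \<open>u(x) = \<M>u(x)\<close> and \<open>u(y) = \<M>u(y)\<close> differ by \<open>O(d\<^sup>\<gamma>\<^sup>\<delta>)\<close>. At large
  distances the bound on \<open>u\<close> suffices.\<close>

definition set_average :: "'a measure \<Rightarrow> 'a set \<Rightarrow> ('a \<Rightarrow> real) \<Rightarrow> real" where
  "set_average M A u = (\<integral>x\<in>A. u x \<partial>M) / measure M A"

lemma mean_op_eq_set_average: "mean_op \<mu> \<rho> u x = set_average \<mu> (cball x (\<rho> x)) u"
  by (simp add: mean_op_def set_average_def)

lemma integrable_indicator_scaleR_AE_bounded:
  fixes u :: "'a \<Rightarrow> real"
  assumes A: "A \<in> fmeasurable M" and u: "u \<in> borel_measurable M"
    and bd: "AE x in M. x \<in> A \<longrightarrow> \<bar>u x\<bar> \<le> C"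
  shows "integrable M (\<lambda>x. indicator A x *\<^sub>R u x)"
proof (rule Bochner_Integration.integrable_bound[where f="\<lambda>x. \<bar>C\<bar> * indicator A x"])
  show "integrable M (\<lambda>x. \<bar>C\<bar> * indicator A x :: real)"
    using A by (intro integrable_mult_right integrable_real_indicator) (auto simp: fmeasurable_def)
  show "(\<lambda>x. indicator A x *\<^sub>R u x) \<in> borel_measurable M"
    using A u by (intro borel_measurable_scaleR borel_measurable_indicator) (auto simp: fmeasurable_def)
  show "AE x in M. norm (indicator A x *\<^sub>R u x) \<le> norm (\<bar>C\<bar> * indicator A x)"
    using bd by eventually_elim (auto simp: indicator_def)
qed

lemma abs_set_integral_le_measure:
  fixes u :: "'a \<Rightarrow> real"
  assumes A: "A \<in> fmeasurable M" and u: "u \<in> borel_measurable M"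
    and bd: "AE x in M. x \<in> A \<longrightarrow> \<bar>u x\<bar> \<le> C" and C: "0 \<le> C"
  shows "\<bar>\<integral>x\<in>A. u x \<partial>M\<bar> \<le> C * measure M A"
proof -
  have "\<bar>\<integral>x\<in>A. u x \<partial>M\<bar> \<le> (\<integral>x. \<bar>indicator A x *\<^sub>R u x\<bar> \<partial>M)"
    unfolding set_lebesgue_integral_def by (rule integral_abs_bound)
  also have "\<dots> \<le> (\<integral>x. C * indicator A x \<partial>M)"
  proof (rule integral_mono_AE)
    show "integrable M (\<lambda>x. \<bar>indicator A x *\<^sub>R u x\<bar>)"
      using integrable_indicator_scaleR_AE_bounded[OF A u bd] by auto
    show "integrable M (\<lambda>x. C * indicator A x :: real)"
      using A by (intro integrable_mult_right integrable_real_indicator) (auto simp: fmeasurable_def)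
    show "AE x in M. \<bar>indicator A x *\<^sub>R u x\<bar> \<le> C * indicator A x"
      using bd by eventually_elim (use C in \<open>auto simp: indicator_def\<close>)
  qed
  also have "\<dots> = C * measure M A"
    using A by (simp add: fmeasurable_def)
  finally show ?thesis .
qed

lemma abs_set_integral_diff_le_measure:
  fixes u :: "'a \<Rightarrow> real"
  assumes A: "A \<in> fmeasurable M" and B: "B \<in> fmeasurable M" and u: "u \<in> borel_measurable M"
    and bd: "AE x in M. x \<in> A \<union> B \<longrightarrow> \<bar>u x\<bar> \<le> C" and C: "0 \<le> C"
  shows "\<bar>(\<integral>x\<in>A. u x \<partial>M) - (\<integral>x\<in>B. u x \<partial>M)\<bar> \<le> C * (measure M (A - B) + measure M (B - A))"
proof -
  have AB: "A - B \<in> fmeasurable M" "B - A \<in> fmeasurable M"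
    using A B by auto
  have "AE x in M. x \<in> A \<longrightarrow> \<bar>u x\<bar> \<le> C" "AE x in M. x \<in> B \<longrightarrow> \<bar>u x\<bar> \<le> C"
    using bd by (eventually_elim, auto)+
  then have iA: "integrable M (\<lambda>x. indicator A x *\<^sub>R u x)"
    and iB: "integrable M (\<lambda>x. indicator B x *\<^sub>R u x)"
    using integrable_indicator_scaleR_AE_bounded A B u by blast+
  have "(\<integral>x\<in>A. u x \<partial>M) - (\<integral>x\<in>B. u x \<partial>M)
      = (\<integral>x. indicator A x *\<^sub>R u x - indicator B x *\<^sub>R u x \<partial>M)"
    unfolding set_lebesgue_integral_def using iA iB by simp
  also have "\<bar>\<dots>\<bar> \<le> (\<integral>x. \<bar>indicator A x *\<^sub>R u x - indicator B x *\<^sub>R u x\<bar> \<partial>M)"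
    by (rule integral_abs_bound)
  also have "\<dots> \<le> (\<integral>x. C * indicator (A - B) x + C * indicator (B - A) x \<partial>M)"
  proof (rule integral_mono_AE)
    show "integrable M (\<lambda>x. \<bar>indicator A x *\<^sub>R u x - indicator B x *\<^sub>R u x\<bar>)"
      using iA iB by auto
    show "integrable M (\<lambda>x. C * indicator (A - B) x + C * indicator (B - A) x :: real)"
      using AB by (intro Bochner_Integration.integrable_add integrable_mult_right integrable_real_indicator)
        (auto simp: fmeasurable_def)
    show "AE x in M. \<bar>indicator A x *\<^sub>R u x - indicator B x *\<^sub>R u x\<bar>
        \<le> C * indicator (A - B) x + C * indicator (B - A) x"
      using bd by eventually_elim (use C in \<open>auto simp: indicator_def\<close>)
  qed
  also have "\<dots> = C * (measure M (A - B) + measure M (B - A))"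
    using AB by (subst Bochner_Integration.integral_add) (auto simp: fmeasurable_def distrib_left)
  finally show ?thesis .
qed

lemma abs_measure_diff_le_measure_Diff:
  assumes A: "A \<in> fmeasurable M" and B: "B \<in> fmeasurable M"
  shows "\<bar>measure M A - measure M B\<bar> \<le> measure M (A - B) + measure M (B - A)"
proof -
  have "measure M A = measure M (A \<inter> B) + measure M (A - B)"
    using measure_Un2[of "A \<inter> B" M A] fmeasurable.Int[OF A B] A
    by (simp add: Un_absorb1 Diff_Int)
  moreover have "measure M B = measure M (A \<inter> B) + measure M (B - A)"
    using measure_Un2[of "A \<inter> B" M B] fmeasurable.Int[OF A B] B
    by (simp add: Un_absorb1 Diff_Int Int_commute)
  ultimately show ?thesis
    using measure_nonneg[of M "A - B"] measure_nonneg[of M "B - A"] by linarith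
qed

lemma abs_divide_diff_le:
  fixes a b \<alpha> \<beta> C S :: real
  assumes "0 < \<alpha>" "0 < \<beta>" "0 \<le> C"
    and "\<bar>a - b\<bar> \<le> C * S" "\<bar>b\<bar> \<le> C * \<beta>" "\<bar>\<alpha> - \<beta>\<bar> \<le> S"
  shows "\<bar>a / \<alpha> - b / \<beta>\<bar> \<le> 2 * C * S / \<alpha>"
proof -
  have split_diff: "a / \<alpha> - b / \<beta> = (a - b) / \<alpha> + b * (\<beta> - \<alpha>) / (\<alpha> * \<beta>)"
    using assms by (simp add: field_simps)
  have 1: "\<bar>(a - b) / \<alpha>\<bar> \<le> C * S / \<alpha>"
    using assms by (simp add: divide_right_mono abs_div)
  have "\<bar>b * (\<beta> - \<alpha>)\<bar> \<le> (C * \<beta>) * S"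
    unfolding abs_mult using assms by (intro mult_mono) (auto simp: abs_minus_commute)
  then have "\<bar>b * (\<beta> - \<alpha>)\<bar> / (\<alpha> * \<beta>) \<le> (C * \<beta>) * S / (\<alpha> * \<beta>)"
    using assms by (intro divide_right_mono) auto
  then have 2: "\<bar>b * (\<beta> - \<alpha>) / (\<alpha> * \<beta>)\<bar> \<le> C * S / \<alpha>"
    using assms by (simp add: abs_div abs_mult)
  have "\<bar>a / \<alpha> - b / \<beta>\<bar> \<le> C * S / \<alpha> + C * S / \<alpha>"
    unfolding split_diff by (rule order_trans[OF abs_triangle_ineq add_mono[OF 1 2]])
  then show ?thesis
    by simp
qed

lemma abs_set_average_le:
  fixes u :: "'a \<Rightarrow> real"
  assumes "A \<in> fmeasurable M" "u \<in> borel_measurable M"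
    and "AE x in M. x \<in> A \<longrightarrow> \<bar>u x\<bar> \<le> C" "0 \<le> C"
  shows "\<bar>set_average M A u\<bar> \<le> C"
  using abs_set_integral_le_measure[OF assms] assms(4) measure_nonneg[of M A]
  unfolding set_average_def by (cases "measure M A = 0") (auto simp: abs_div divide_le_eq)

lemma abs_set_average_diff_le:
  fixes u :: "'a \<Rightarrow> real"
  assumes A: "A \<in> fmeasurable M" and B: "B \<in> fmeasurable M" and u: "u \<in> borel_measurable M"
    and bd: "AE x in M. x \<in> A \<union> B \<longrightarrow> \<bar>u x\<bar> \<le> C" and C: "0 \<le> C"
    and "0 < measure M A" "0 < measure M B"
  shows "\<bar>set_average M A u - set_average M B u\<bar>
    \<le> 2 * C * (measure M (A - B) + measure M (B - A)) / measure M A"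
  unfolding set_average_def
proof (rule abs_divide_diff_le)
  have "AE x in M. x \<in> B \<longrightarrow> \<bar>u x\<bar> \<le> C"
    using bd by eventually_elim auto
  then show "\<bar>(\<integral>x\<in>B. u x \<partial>M)\<bar> \<le> C * measure M B"
    by (rule abs_set_integral_le_measure[OF B u _ C])
qed (use assms abs_set_integral_diff_le_measure[OF A B u bd C]
      abs_measure_diff_le_measure_Diff[OF A B] in auto)

lemma metric_measure_space_ball_fmeasurable:
  assumes "metric_measure_space \<mu>"
  shows "ball x r \<in> fmeasurable \<mu>"
proof (cases "0 < r")
  case True
  then show ?thesis
    using assms unfolding metric_measure_space_def fmeasurable_def by (auto intro: borel_open)
next
  case False
  then show ?thesis
    by (simp add: ball_empty)
qed

lemma metric_measure_space_cball_fmeasurable: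
  assumes "metric_measure_space \<mu>"
  shows "cball x r \<in> fmeasurable \<mu>"
proof (rule fmeasurableI2)
  show "cball x r \<subseteq> ball x (\<bar>r\<bar> + 1)"
    by auto
  show "cball x r \<in> sets \<mu>"
    using assms unfolding metric_measure_space_def by (auto intro: borel_closed)
qed (rule metric_measure_space_ball_fmeasurable[OF assms])

lemma metric_measure_space_measure_ball_pos:
  assumes "metric_measure_space \<mu>" "0 < r"
  shows "0 < measure \<mu> (ball x r)"
  using assms emeasure_eq_measure2[OF metric_measure_space_ball_fmeasurable[OF assms(1)]]
  unfolding metric_measure_space_def by (metis ennreal_less_zero_iff)

lemma metric_measure_space_measure_cball_pos:
  assumes "metric_measure_space \<mu>" "0 < r"
  shows "0 < measure \<mu> (cball x r)"
proof -
  have "measure \<mu> (ball x r) \<le> measure \<mu> (cball x r)"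
    using metric_measure_space_ball_fmeasurable[OF assms(1)]
      metric_measure_space_cball_fmeasurable[OF assms(1)]
    by (intro measure_mono_fmeasurable ball_subset_cball) (auto intro: fmeasurableD)
  then show ?thesis
    using metric_measure_space_measure_ball_pos[OF assms, of x] by linarith
qed

definition annular_decay_with :: "'a::metric_space measure \<Rightarrow> real \<Rightarrow> real \<Rightarrow> bool" where
  "annular_decay_with \<mu> \<delta> D \<longleftrightarrow> (\<forall>x r R. 0 < r \<and> r \<le> R \<longrightarrow>
     measure \<mu> (ball x R - ball x r) \<le> D * ((R - r) / R) powr \<delta> * measure \<mu> (ball x R))"

lemma annular_decay_iff_with: "annular_decay \<mu> \<delta> \<longleftrightarrow> (\<exists>D\<ge>1. annular_decay_with \<mu> \<delta> D)"
  by (simp add: annular_decay_def annular_decay_with_def)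

lemma measure_annulus_le:
  assumes "annular_decay_with \<mu> \<delta> D" "0 \<le> D" "0 \<le> \<delta>"
    and "0 < r" "r \<le> R" "(R - r) / R \<le> t"
  shows "measure \<mu> (ball x R - ball x r) \<le> D * t powr \<delta> * measure \<mu> (ball x R)"
proof -
  have "measure \<mu> (ball x R - ball x r) \<le> D * ((R - r) / R) powr \<delta> * measure \<mu> (ball x R)"
    using assms unfolding annular_decay_with_def by blast
  also have "\<dots> \<le> D * t powr \<delta> * measure \<mu> (ball x R)"
    using assms by (intro mult_right_mono mult_left_mono powr_mono2) auto
  finally show ?thesis .
qed

lemma measure_ball_le_doubling:
  assumes mms: "metric_measure_space \<mu>" and ann: "annular_decay_with \<mu> \<delta> D" "0 \<le> D" "0 \<le> \<delta>"
    and "0 < r" "r \<le> R" "(R - r) / R \<le> t" "D * t powr \<delta> \<le> 1/2"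
  shows "measure \<mu> (ball x R) \<le> 2 * measure \<mu> (ball x r)"
proof -
  have "measure \<mu> (ball x R) - measure \<mu> (ball x r) = measure \<mu> (ball x R - ball x r)"
    using metric_measure_space_ball_fmeasurable[OF mms, of x R] \<open>r \<le> R\<close>
    by (intro measure_Diff[symmetric] fmeasurableD metric_measure_space_ball_fmeasurable[OF mms])
      (auto simp: fmeasurable_def)
  also have "\<dots> \<le> D * t powr \<delta> * measure \<mu> (ball x R)"
    using measure_annulus_le assms by blast
  also have "\<dots> \<le> 1/2 * measure \<mu> (ball x R)"
    using assms by (intro mult_right_mono) auto
  finally show ?thesis
    by simp
qed

lemma cball_diff_subset_annulus:
  assumes "dist x y + \<bar>r - s\<bar> \<le> e"
  shows "cball x r - cball y s \<subseteq> ball x (r + e) - ball x (r - e)"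
proof
  fix z assume "z \<in> cball x r - cball y s"
  moreover have "dist y z \<le> dist x y + dist x z"
    by (metis dist_commute dist_triangle)
  ultimately show "z \<in> ball x (r + e) - ball x (r - e)"
    using assms by auto
qed

lemma measure_cball_diff_le:
  assumes mms: "metric_measure_space \<mu>" and ann: "annular_decay_with \<mu> \<delta> D" "0 \<le> D" "0 \<le> \<delta>"
    and "0 < e" "e < r" "dist x y + \<bar>r - s\<bar> \<le> e" "2 * e / (r + e) \<le> t"
  shows "measure \<mu> (cball x r - cball y s) \<le> D * t powr \<delta> * measure \<mu> (ball x (r + e))"
proof -
  have "measure \<mu> (cball x r - cball y s) \<le> measure \<mu> (ball x (r + e) - ball x (r - e))"
    using cball_diff_subset_annulus[OF assms(7)]
    by (intro measure_mono_fmeasurable) (auto intro: fmeasurableD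
        metric_measure_space_ball_fmeasurable metric_measure_space_cball_fmeasurable mms)
  also have "\<dots> \<le> D * t powr \<delta> * measure \<mu> (ball x (r + e))"
    using assms by (intro measure_annulus_le) auto
  finally show ?thesis .
qed

lemma measure_cball_symdiff_le:
  assumes mms: "metric_measure_space \<mu>" and ann: "annular_decay_with \<mu> \<delta> D" "0 \<le> D" "0 \<le> \<delta>"
    and m: "0 < m" "m \<le> r" "m \<le> s" and e: "0 < e" "e < m"
    and close: "dist x y + \<bar>r - s\<bar> \<le> e" and small: "D * (2 * e / m) powr \<delta> \<le> 1/2"
  shows "measure \<mu> (cball x r - cball y s) + measure \<mu> (cball y s - cball x r)
    \<le> 4 * D * (2 * e / m) powr \<delta> * measure \<mu> (cball x r)"
proof -
  define q where "q = D * (2 * e / m) powr \<delta>"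
  have q: "0 \<le> q"
    using ann unfolding q_def by simp
  have fm: "ball z t \<in> fmeasurable \<mu>" "cball z t \<in> fmeasurable \<mu>"
    "ball z t \<in> sets \<mu>" "cball z t \<in> sets \<mu>" for z t
    using metric_measure_space_ball_fmeasurable[OF mms, of z t]
      metric_measure_space_cball_fmeasurable[OF mms, of z t]
    by (auto intro: fmeasurableD)
  have ratio: "2 * e / (t + e') \<le> 2 * e / m" if "m \<le> t" "0 \<le> e'" for t e'
    using that m e by (intro divide_left_mono) auto
  have "measure \<mu> (ball x (r + 2 * e)) \<le> 2 * measure \<mu> (ball x r)"
    using ratio[of r "2 * e"] m e small
    by (intro measure_ball_le_doubling[OF mms ann, where t = "2 * e / m"]) auto
  also have "\<dots> \<le> 2 * measure \<mu> (cball x r)"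
    using fm by (auto intro!: measure_mono_fmeasurable)
  finally have doubling: "measure \<mu> (ball x (r + 2 * e)) \<le> 2 * measure \<mu> (cball x r)" .
  have "measure \<mu> (cball x r - cball y s) \<le> q * measure \<mu> (ball x (r + e))"
    unfolding q_def using ratio[of r e] m e close
    by (intro measure_cball_diff_le[OF mms ann]) auto
  also have "\<dots> \<le> q * measure \<mu> (ball x (r + 2 * e))"
    using q fm e by (intro mult_left_mono measure_mono_fmeasurable) auto
  finally have diff_xy: "measure \<mu> (cball x r - cball y s) \<le> q * measure \<mu> (ball x (r + 2 * e))" .
  have "ball y (s + e) \<subseteq> ball x (r + 2 * e)"
  proof
    fix z assume "z \<in> ball y (s + e)"
    then show "z \<in> ball x (r + 2 * e)"
      using close dist_triangle[of x z y] by auto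
  qed
  then have "measure \<mu> (ball y (s + e)) \<le> measure \<mu> (ball x (r + 2 * e))"
    using fm by (intro measure_mono_fmeasurable) auto
  moreover have "measure \<mu> (cball y s - cball x r) \<le> q * measure \<mu> (ball y (s + e))"
    unfolding q_def using ratio[of s e] m e close
    by (intro measure_cball_diff_le[OF mms ann]) (auto simp: dist_commute abs_minus_commute)
  ultimately have diff_yx: "measure \<mu> (cball y s - cball x r) \<le> q * measure \<mu> (ball x (r + 2 * e))"
    using q by (meson mult_left_mono order_trans)
  have "q * measure \<mu> (ball x (r + 2 * e)) \<le> q * (2 * measure \<mu> (cball x r))"
    using doubling q by (rule mult_left_mono)
  with diff_xy diff_yx show ?thesis
    unfolding q_def by (simp add: algebra_simps)
qed

lemma set_average_cball_diff_le:
  fixes u :: "'a::metric_space \<Rightarrow> real"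
  assumes mms: "metric_measure_space \<mu>" and ann: "annular_decay_with \<mu> \<delta> D" "0 \<le> D" "0 \<le> \<delta>"
    and m: "0 < m" "m \<le> r" "m \<le> s" and e: "0 < e" "e < m"
    and close: "dist x y + \<bar>r - s\<bar> \<le> e" and small: "D * (2 * e / m) powr \<delta> \<le> 1/2"
    and u: "u \<in> borel_measurable \<mu>"
    and bd: "AE z in \<mu>. z \<in> cball x r \<union> cball y s \<longrightarrow> \<bar>u z\<bar> \<le> C" and C: "0 \<le> C"
  shows "\<bar>set_average \<mu> (cball x r) u - set_average \<mu> (cball y s) u\<bar> \<le> 8 * C * D * (2 * e / m) powr \<delta>"
proof -
  let ?V = "measure \<mu> (cball x r)"
  have V: "0 < ?V"
    using metric_measure_space_measure_cball_pos[OF mms] m by force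
  have "\<bar>set_average \<mu> (cball x r) u - set_average \<mu> (cball y s) u\<bar>
      \<le> 2 * C * (measure \<mu> (cball x r - cball y s) + measure \<mu> (cball y s - cball x r)) / ?V"
    using metric_measure_space_measure_cball_pos[OF mms] m
    by (intro abs_set_average_diff_le metric_measure_space_cball_fmeasurable mms u bd C) auto
  also have "\<dots> \<le> 2 * C * (4 * D * (2 * e / m) powr \<delta> * ?V) / ?V"
    using measure_cball_symdiff_le[OF assms(1-11)] C V
    by (intro divide_right_mono mult_left_mono) auto
  also have "\<dots> = 8 * C * D * (2 * e / m) powr \<delta>"
    using V by simp
  finally show ?thesis .
qed

lemma small_ratio_powr_le_half:
  fixes D \<delta> m :: real
  assumes "0 < D" "0 < \<delta>" "0 < m"
  obtains \<eta> where "0 < \<eta>" "\<eta> < m" "\<And>e. 0 \<le> e \<Longrightarrow> e \<le> \<eta> \<Longrightarrow> D * (2 * e / m) powr \<delta> \<le> 1/2"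
proof
  define t where "t = (1 / (2 * D)) powr (1 / \<delta>)"
  have t: "0 < t" "t powr \<delta> = 1 / (2 * D)"
    unfolding t_def using assms by (simp_all add: powr_powr)
  define w where "w = min 1 t"
  have w: "0 < w" "w \<le> 1" "w \<le> t"
    unfolding w_def using t by auto
  show "0 < m / 2 * w" "m / 2 * w < m"
    using assms w by auto
  fix e assume e: "0 \<le> e" "e \<le> m / 2 * w"
  then have "2 * e / m \<le> w"
    using assms by (simp add: divide_le_eq mult.commute)
  then have "(2 * e / m) powr \<delta> \<le> t powr \<delta>"
    using assms e w by (intro powr_mono2) auto
  then show "D * (2 * e / m) powr \<delta> \<le> 1/2"
    using assms t by (simp add: field_simps)
qed

lemma powr_small_scale:
  fixes c \<gamma> \<eta> :: real
  assumes "0 \<le> c" "0 < \<gamma>" "0 < \<eta>"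
  obtains d0 where "0 < d0" "d0 \<le> 1" "\<And>d. 0 \<le> d \<Longrightarrow> d \<le> d0 \<Longrightarrow> c * d powr \<gamma> \<le> \<eta>"
proof
  define d0 where "d0 = min 1 ((\<eta> / (1 + c)) powr (1 / \<gamma>))"
  show "0 < d0" "d0 \<le> 1"
    using assms by (auto simp: d0_def)
  fix d assume "0 \<le> d" "d \<le> d0"
  then have "d powr \<gamma> \<le> ((\<eta> / (1 + c)) powr (1 / \<gamma>)) powr \<gamma>"
    unfolding d0_def using assms by (intro powr_mono2) auto
  also have "\<dots> = \<eta> / (1 + c)"
    using assms by (simp add: powr_powr)
  finally have "(1 + c) * d powr \<gamma> \<le> \<eta>"
    using assms by (simp add: field_simps)
  moreover have "0 \<le> d powr \<gamma>"
    by simp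
  ultimately show "c * d powr \<gamma> \<le> \<eta>"
    unfolding distrib_right by linarith
qed

lemma mean_value_holder_small_scale:
  fixes u \<rho> :: "'a::metric_space \<Rightarrow> real"
  assumes mms: "metric_measure_space \<mu>" and ann: "annular_decay_with \<mu> \<delta> D" "0 < D" "0 < \<delta>"
    and \<gamma>: "0 < \<gamma>" "\<gamma> \<le> 1"
    and hol: "\<forall>x\<in>K. \<forall>y\<in>K. \<bar>\<rho> x - \<rho> y\<bar> \<le> L * dist x y powr \<gamma>" "0 \<le> L"
    and m: "0 < m" "\<forall>x\<in>K. m \<le> \<rho> x"
    and mean: "\<forall>x\<in>K. u x = set_average \<mu> (cball x (\<rho> x)) u"
    and u: "u \<in> borel_measurable \<mu>"
    and bd: "AE z in \<mu>. z \<in> (\<Union>x\<in>K. cball x (\<rho> x)) \<longrightarrow> \<bar>u z\<bar> \<le> C" and C: "0 \<le> C"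
  obtains d0 C1 where "0 < d0"
    "\<forall>x\<in>K. \<forall>y\<in>K. dist x y \<le> d0 \<longrightarrow> \<bar>u x - u y\<bar> \<le> C1 * dist x y powr (\<gamma> * \<delta>)"
proof -
  obtain \<eta> where \<eta>: "0 < \<eta>" "\<eta> < m" "\<And>e. 0 \<le> e \<Longrightarrow> e \<le> \<eta> \<Longrightarrow> D * (2 * e / m) powr \<delta> \<le> 1/2"
    using small_ratio_powr_le_half[OF ann(2,3) m(1)] by blast
  obtain d0 where d0: "0 < d0" "d0 \<le> 1" "\<And>d. 0 \<le> d \<Longrightarrow> d \<le> d0 \<Longrightarrow> (1 + L) * d powr \<gamma> \<le> \<eta>"
    using powr_small_scale[of "1 + L" \<gamma> \<eta>] hol(2) \<gamma> \<eta> by auto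
  have estimate: "\<bar>u x - u y\<bar> \<le> 8 * C * D * (2 * (1 + L) / m) powr \<delta> * dist x y powr (\<gamma> * \<delta>)"
    if x: "x \<in> K" and y: "y \<in> K" and near: "dist x y \<le> d0" and "x \<noteq> y" for x y
  proof -
    define e where "e = (1 + L) * dist x y powr \<gamma>"
    have "dist x y \<le> dist x y powr \<gamma>"
      using powr_mono'[of \<gamma> 1 "dist x y"] \<gamma> near d0 by auto
    then have close: "dist x y + \<bar>\<rho> x - \<rho> y\<bar> \<le> e"
      using hol(1)[rule_format, OF x y] unfolding e_def by (simp add: algebra_simps)
    have "e \<le> \<eta>"
      unfolding e_def using d0(3) near by simp
    moreover have "0 < e"
      unfolding e_def using hol(2) \<open>x \<noteq> y\<close> by simp
    moreover have "AE z in \<mu>. z \<in> cball x (\<rho> x) \<union> cball y (\<rho> y) \<longrightarrow> \<bar>u z\<bar> \<le> C"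
      using bd by eventually_elim (use x y in blast)
    ultimately have "\<bar>u x - u y\<bar> \<le> 8 * C * D * (2 * e / m) powr \<delta>"
      using mean x y m \<eta> ann
      by (auto intro!: set_average_cball_diff_le[OF mms ann(1) _ _ m(1) _ _ _ _ close _ u _ C])
    also have "(2 * e / m) powr \<delta> = (2 * (1 + L) / m * dist x y powr \<gamma>) powr \<delta>"
      unfolding e_def by (simp add: algebra_simps)
    also have "\<dots> = (2 * (1 + L) / m) powr \<delta> * dist x y powr (\<gamma> * \<delta>)"
      using hol(2) m by (subst powr_mult) (auto simp: powr_powr)
    finally show ?thesis
      by (simp add: mult.assoc)
  qed
  show ?thesis
  proof (rule that[OF d0(1)], intro ballI impI)
    fix x y assume "x \<in> K" "y \<in> K" "dist x y \<le> d0"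
    then show "\<bar>u x - u y\<bar> \<le> 8 * C * D * (2 * (1 + L) / m) powr \<delta> * dist x y powr (\<gamma> * \<delta>)"
      using estimate by (cases "x = y") auto
  qed
qed

lemma holder_estimate_of_small_scales:
  fixes f :: "'a::metric_space \<Rightarrow> real"
  assumes "0 < d0" "0 < \<theta>" "0 \<le> B" "\<forall>x\<in>S. \<bar>f x\<bar> \<le> B"
    and small: "\<forall>x\<in>S. \<forall>y\<in>S. dist x y \<le> d0 \<longrightarrow> \<bar>f x - f y\<bar> \<le> C1 * dist x y powr \<theta>"
  shows "\<exists>C. \<forall>x\<in>S. \<forall>y\<in>S. \<bar>f x - f y\<bar> \<le> C * dist x y powr \<theta>"
proof (intro exI ballI)
  define C2 where "C2 = 2 * B / d0 powr \<theta>"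
  fix x y assume x: "x \<in> S" and y: "y \<in> S"
  show "\<bar>f x - f y\<bar> \<le> max C1 C2 * dist x y powr \<theta>"
  proof (cases "dist x y \<le> d0")
    case True
    then have "\<bar>f x - f y\<bar> \<le> C1 * dist x y powr \<theta>"
      using small x y by blast
    also have "\<dots> \<le> max C1 C2 * dist x y powr \<theta>"
      by (intro mult_right_mono) auto
    finally show ?thesis .
  next
    case False
    have "\<bar>f x\<bar> \<le> B" "\<bar>f y\<bar> \<le> B"
      using assms(4) x y by auto
    then have "\<bar>f x - f y\<bar> \<le> 2 * B"
      using abs_triangle_ineq4[of "f x" "f y"] by linarith
    also have "\<dots> = C2 * d0 powr \<theta>"
      using assms(1) unfolding C2_def by simp
    also have "\<dots> \<le> max C1 C2 * dist x y powr \<theta>"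
      using False assms unfolding C2_def by (intro mult_mono powr_mono2) (auto intro: max.coboundedI2)
    finally show ?thesis .
  qed
qed

theorem corollary3p11:
  fixes \<mu> :: "'a::metric_space measure" and \<Omega> :: "'a set" and \<rho> u :: "'a \<Rightarrow> real"
    and \<delta> \<gamma> :: real
  assumes "proper_space TYPE('a)"
    and "metric_measure_space \<mu>"
    and "0 < \<delta>" "\<delta> \<le> 1" "annular_decay \<mu> \<delta>"
    and "0 < \<gamma>" "\<gamma> \<le> 1"
    and "domain \<Omega>" "bounded \<Omega>"
    and "admissible_radius \<Omega> \<rho>" "holder_on (closure \<Omega>) \<gamma> \<rho>"
    and "u \<in> borel_measurable \<mu>"
    and "\<exists>C. AE x in \<mu>. x \<in> \<Omega> \<union> (\<Union>z\<in>\<Omega>. cball z (\<rho> z)) \<longrightarrow> \<bar>u x\<bar> \<le> C"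
    and "\<forall>x\<in>\<Omega>. mean_op \<mu> \<rho> u x = u x"
  shows "locally_holder \<Omega> (\<gamma> * \<delta>) u"
proof -
  note mms = assms(2) and u = assms(12)
  obtain D where D: "1 \<le> D" "annular_decay_with \<mu> \<delta> D"
    using assms(5) annular_decay_iff_with by blast
  obtain L where L: "0 < L" "\<forall>x\<in>closure \<Omega>. \<forall>y\<in>closure \<Omega>. \<bar>\<rho> x - \<rho> y\<bar> \<le> L * dist x y powr \<gamma>"
    using assms(11) unfolding holder_on_def by blast
  obtain C0 where "AE x in \<mu>. x \<in> \<Omega> \<union> (\<Union>z\<in>\<Omega>. cball z (\<rho> z)) \<longrightarrow> \<bar>u x\<bar> \<le> C0"
    using assms(13) by blast
  then have bd: "AE x in \<mu>. x \<in> (\<Union>z\<in>\<Omega>. cball z (\<rho> z)) \<longrightarrow> \<bar>u x\<bar> \<le> max C0 0"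
    by (rule eventually_mono) auto
  have \<rho>: "continuous_on (closure \<Omega>) \<rho>" "\<forall>x\<in>\<Omega>. 0 < \<rho> x"
    using assms(10) unfolding admissible_radius_def by auto
  have mean: "\<forall>x\<in>\<Omega>. u x = set_average \<mu> (cball x (\<rho> x)) u"
    using assms(14) by (simp add: mean_op_eq_set_average)
  have u_bounded: "\<forall>x\<in>\<Omega>. \<bar>u x\<bar> \<le> max C0 0"
  proof
    fix x assume "x \<in> \<Omega>"
    then have "AE z in \<mu>. z \<in> cball x (\<rho> x) \<longrightarrow> \<bar>u z\<bar> \<le> max C0 0"
      using bd by (auto elim!: eventually_mono)
    with \<open>x \<in> \<Omega>\<close> show "\<bar>u x\<bar> \<le> max C0 0"
      unfolding mean[rule_format, OF \<open>x \<in> \<Omega>\<close>]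
      by (intro abs_set_average_le[OF metric_measure_space_cball_fmeasurable[OF mms] u]) auto
  qed
  show ?thesis
    unfolding locally_holder_def
  proof (intro allI impI)
    fix K assume K: "compact K \<and> K \<subseteq> \<Omega>"
    show "\<exists>C. \<forall>x\<in>K. \<forall>y\<in>K. \<bar>u x - u y\<bar> \<le> C * dist x y powr (\<gamma> * \<delta>)"
    proof (cases "K = {}")
      case False
      have "K \<subseteq> closure \<Omega>"
        using K closure_subset by blast
      then obtain x0 where x0: "x0 \<in> K" "\<forall>x\<in>K. \<rho> x0 \<le> \<rho> x"
        using continuous_attains_inf[OF _ False continuous_on_subset[OF \<rho>(1)]] K by blast
      have hol_K: "\<forall>x\<in>K. \<forall>y\<in>K. \<bar>\<rho> x - \<rho> y\<bar> \<le> L * dist x y powr \<gamma>"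
        using L(2) \<open>K \<subseteq> closure \<Omega>\<close> by blast
      have bd_K: "AE z in \<mu>. z \<in> (\<Union>x\<in>K. cball x (\<rho> x)) \<longrightarrow> \<bar>u z\<bar> \<le> max C0 0"
        using bd by (rule eventually_mono) (use K in blast)
      have "0 < D" "0 \<le> L" "0 < \<rho> x0"
        using D(1) L(1) \<rho>(2) x0(1) K by auto
      moreover have "\<forall>x\<in>K. u x = set_average \<mu> (cball x (\<rho> x)) u"
        using mean K by blast
      ultimately obtain d0 C1 where "0 < d0"
        "\<forall>x\<in>K. \<forall>y\<in>K. dist x y \<le> d0 \<longrightarrow> \<bar>u x - u y\<bar> \<le> C1 * dist x y powr (\<gamma> * \<delta>)"
        using mean_value_holder_small_scale[OF mms D(2) _ assms(3,6,7) hol_K _ _ x0(2) _ u bd_K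
            max.cobounded2] by blast
      moreover have "0 < \<gamma> * \<delta>" "\<forall>x\<in>K. \<bar>u x\<bar> \<le> max C0 0"
        using assms(3,6) u_bounded K by auto
      ultimately show ?thesis
        using holder_estimate_of_small_scales[OF _ _ max.cobounded2] by blast
    qed simp
  qed
qed

end
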